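(* Let $L=1$ and $\vec m=(a,b)\in\mathcal R^2$ be arbitrary. For every topological space $X$ and every $n\ge1$, $\partial_n\circ\mathcal{SD}_n=\mathcal{SD}_{n-1}\circ\partial_n$ as maps $\mathcal K_n(X)\to\mathcal K_{n-1}(X)$ (and trivially for $n=0$).
   Context: $\mathcal R$ is a commutative ring with unit. $\mathcal S_n(X)$ = continuous maps $[0,1]^n\to X$ ($[0,1]^0=\{0\}$), $\mathcal K_n(X)$ the free $\mathcal R$-module on $\mathcal S_n(X)$, $\mathcal K_{-1}(X)=0$. Boundary: for $n\ge1$, $\partial_n(T)=\sum_{j=1}^n(-1)^{j+1}(a\langle T\rangle_{n,0,j}+b\langle T\rangle_{n,1,j})$ where $\langle T\rangle_{n,i,j}(x_1,\dots,x_{n-1})=T(x_1,\dots,x_{j-1},i,x_j,\dots,x_{n-1})$ ($\langle T\rangle_{1,i,1}(0)=T(i)$), extended linearly, $\partial_0=0$. Subdivision maps $\mathcal{SD}_n:\mathcal K_n(X)\to\mathcal K_n(X)$ ($\mathcal R$-linear): $\mathcal{SD}_{-1}=0$, $\mathcal{SD}_0(T)=-T$, and for $n\ge1$ $$\mathcal{SD}_n(T)=\sum_{\vec e\in\{0,2\}^n}\ \sum_{\vec v\in\mathcal V_{\vec e,n}}\Big(-\prod_{i=1}^nv_i\Big)\,T\circ h_{\vec e,\vec v},$$ where $\mathcal V_{\vec e,n}$ is the set of $\vec v\in\{-1,1\}^n$ with $v_i=1$ whenever $e_i=0$ (and $v_i\in\{-1,1\}$ arbitrary when $e_i=2$), and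 $h_{\vec e,\vec v}:[0,1]^n\to[0,1]^n$, $h_{\vec e,\vec v}(x)_i=\frac13(e_i+v_ix_i)$. *)

theory Defs
  imports "HOL-Analysis.Analysis"
begin

text \<open>Coordinates are 0-based: coordinate i here is x_(i+1) of the paper.
  The cube [0,1]^n is represented inside nat \<Rightarrow> real, with coordinates
  i \<ge> n equal to 0 (so [0,1]^0 = {\<lambda>_. 0}).\<close>

definition unit_cube :: "nat \<Rightarrow> (nat \<Rightarrow> real) set" where
  "unit_cube n = {x. (\<forall>i<n. 0 \<le> x i \<and> x i \<le> 1) \<and> (\<forall>i\<ge>n. x i = 0)}"

definition cube_top :: "nat \<Rightarrow> (nat \<Rightarrow> real) topology" where
  "cube_top n = subtopology (powertop_real UNIV) (unit_cube n)"

text \<open>Singular n-cubes S_n(X): continuous maps [0,1]^n \<rightarrow> X, made extensional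
  (value undefined off the cube) so that equality of cubes is equality of maps on [0,1]^n.\<close>
definition singular_cubes :: "nat \<Rightarrow> 'x topology \<Rightarrow> ((nat \<Rightarrow> real) \<Rightarrow> 'x) set" where
  "singular_cubes n X = {T. continuous_map (cube_top n) X T \<and> (\<forall>x. x \<notin> unit_cube n \<longrightarrow> T x = undefined)}"

text \<open>Chains: finitely supported R-valued functions on cubes (the free R-module).\<close>
type_synonym ('x, 'r) chain = "((nat \<Rightarrow> real) \<Rightarrow> 'x) \<Rightarrow> 'r"

definition cube_chains :: "nat \<Rightarrow> 'x topology \<Rightarrow> ('x, 'r::comm_ring_1) chain set" where
  "cube_chains n X = {c. finite {T. c T \<noteq> 0} \<and> (\<forall>T. c T \<noteq> 0 \<longrightarrow> T \<in> singular_cubes n X)}"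

definition basis_chain :: "((nat \<Rightarrow> real) \<Rightarrow> 'x) \<Rightarrow> ('x, 'r::comm_ring_1) chain" where
  "basis_chain T = (\<lambda>S. if S = T then 1 else 0)"

definition lin_ext :: "(((nat \<Rightarrow> real) \<Rightarrow> 'x) \<Rightarrow> ('y, 'r::comm_ring_1) chain)
     \<Rightarrow> ('x, 'r) chain \<Rightarrow> ('y, 'r) chain" where
  "lin_ext f c = (\<lambda>S. \<Sum>T\<in>{T. c T \<noteq> 0}. c T * f T S)"

text \<open>Face \<langle>T\<rangle>_{n,i,j}, with 0-based j (paper's j = this j + 1).\<close>
definition cube_face :: "nat \<Rightarrow> real \<Rightarrow> nat \<Rightarrow> ((nat \<Rightarrow> real) \<Rightarrow> 'x) \<Rightarrow> ((nat \<Rightarrow> real) \<Rightarrow> 'x)" where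
  "cube_face n i j T = (\<lambda>x. if x \<in> unit_cube (n - 1)
      then T (\<lambda>k. if k < j then x k else if k = j then i else x (k - 1)) else undefined)"

definition boundary_cube :: "'r::comm_ring_1 \<Rightarrow> 'r \<Rightarrow> nat \<Rightarrow> ((nat \<Rightarrow> real) \<Rightarrow> 'x) \<Rightarrow> ('x, 'r) chain" where
  "boundary_cube a b n T = (if n = 0 then (\<lambda>_. 0) else
     (\<lambda>S. \<Sum>j<n. (-1) ^ j * (a * basis_chain (cube_face n 0 j T) S + b * basis_chain (cube_face n 1 j T) S)))"

definition boundary :: "'r::comm_ring_1 \<Rightarrow> 'r \<Rightarrow> nat \<Rightarrow> ('x, 'r) chain \<Rightarrow> ('x, 'r) chain" where
  "boundary a b n = lin_ext (boundary_cube a b n)"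

definition sd_map :: "nat \<Rightarrow> (nat \<Rightarrow> real) \<Rightarrow> (nat \<Rightarrow> int) \<Rightarrow> (nat \<Rightarrow> real) \<Rightarrow> (nat \<Rightarrow> real)" where
  "sd_map n e v x = (\<lambda>i. if i < n then (e i + real_of_int (v i) * x i) / 3 else 0)"

definition sd_E :: "nat \<Rightarrow> (nat \<Rightarrow> real) set" where
  "sd_E n = {..<n} \<rightarrow>\<^sub>E {0, 2}"

definition sd_V :: "nat \<Rightarrow> (nat \<Rightarrow> real) \<Rightarrow> (nat \<Rightarrow> int) set" where
  "sd_V n e = {v \<in> {..<n} \<rightarrow>\<^sub>E {-1, 1}. \<forall>i<n. e i = 0 \<longrightarrow> v i = 1}"

definition sd_cube :: "nat \<Rightarrow> ((nat \<Rightarrow> real) \<Rightarrow> 'x) \<Rightarrow> ('x, 'r::comm_ring_1) chain" where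
  "sd_cube n T = (if n = 0 then (\<lambda>S. - basis_chain T S) else
     (\<lambda>S. \<Sum>e\<in>sd_E n. \<Sum>v\<in>sd_V n e.
        (- of_int (\<Prod>i<n. v i)) * basis_chain
           (\<lambda>x. if x \<in> unit_cube n then T (sd_map n e v x) else undefined) S))"

definition subdivision :: "nat \<Rightarrow> ('x, 'r::comm_ring_1) chain \<Rightarrow> ('x, 'r) chain" where
  "subdivision n = lin_ext (sd_cube n)"

end

theory Submission
  imports Defs
begin

text \<open>Both sides are R-linear, so it suffices to treat a single cube T. Pairing the
  coordinates of \<open>e\<close> and \<open>v\<close>, the subdivision of T is a signed sum of the \<open>3^n\<close> pieces
  \<open>T \<circ> h\<close>, where \<open>h\<close> applies in each coordinate one of the maps \<open>t/3\<close>, \<open>(2 - t)/3\<close>,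
  \<open>(2 + t)/3\<close>, and the sign is minus the product of their orientations. Fix a face
  direction j and a side i \<in> {0, 1}. Splitting off coordinate j, the i-face of a piece is
  a piece of the subdivision of the face of T at height \<open>h\<^sub>j(i)\<close>. Summing over the three
  choices for coordinate j with their orientation signs, the faces at the interior heights
  1/3 and 2/3 cancel, and what remains is the subdivision of the i-face of T. So every face
  operator commutes with subdivision, hence so does the boundary, which is a linear
  combination of face operators.\<close>

abbreviation supp :: "('x, 'r::comm_ring_1) chain \<Rightarrow> ((nat \<Rightarrow> real) \<Rightarrow> 'x) set" where
  "supp c \<equiv> {T. c T \<noteq> 0}"

lemma lin_ext_eq_sum:
  assumes "finite A" "supp c \<subseteq> A"
  shows "lin_ext f c S = (\<Sum>T\<in>A. c T * f T S)"
  unfolding lin_ext_def by (rule sum.mono_neutral_left) (use assms in auto)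

lemma finite_supp_basis_chain: "finite (supp (basis_chain T :: ('x, 'r::comm_ring_1) chain))"
  by (rule finite_subset[of _ "{T}"]) (auto simp: basis_chain_def)

lemma lin_ext_basis_chain: "lin_ext f (basis_chain T) = f T"
  by (rule ext, subst lin_ext_eq_sum[of "{T}"]) (auto simp: basis_chain_def)

lemma finite_supp_sum:
  assumes "finite I" "\<And>i. i \<in> I \<Longrightarrow> finite (supp (c i))"
  shows "finite (supp (\<lambda>S. \<Sum>i\<in>I. k i * c i S))"
  by (rule finite_subset[of _ "\<Union>i\<in>I. supp (c i)"]) (use assms in \<open>auto intro: ccontr\<close>)

lemma finite_supp_add:
  assumes "finite (supp c)" "finite (supp d)"
  shows "finite (supp (\<lambda>S. k * c S + l * d S))"
  by (rule finite_subset[of _ "supp c \<union> supp d"]) (use assms in auto)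

lemma lin_ext_sum:
  assumes "finite I" "\<And>i. i \<in> I \<Longrightarrow> finite (supp (c i))"
  shows "lin_ext f (\<lambda>S. \<Sum>i\<in>I. k i * c i S) S' = (\<Sum>i\<in>I. k i * lin_ext f (c i) S')"
proof -
  define A where "A = (\<Union>i\<in>I. supp (c i))"
  have "finite A"
    using assms by (simp add: A_def)
  have "lin_ext f (\<lambda>S. \<Sum>i\<in>I. k i * c i S) S' = (\<Sum>U\<in>A. (\<Sum>i\<in>I. k i * c i U) * f U S')"
    by (rule lin_ext_eq_sum[OF \<open>finite A\<close>]) (auto simp: A_def intro: ccontr)
  also have "\<dots> = (\<Sum>i\<in>I. k i * (\<Sum>U\<in>A. c i U * f U S'))"
    by (simp add: sum_distrib_right sum_distrib_left mult.assoc) (rule sum.swap)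
  also have "\<dots> = (\<Sum>i\<in>I. k i * lin_ext f (c i) S')"
  proof (intro sum.cong refl arg_cong[where f = "(*) _"])
    show "(\<Sum>U\<in>A. c i U * f U S') = lin_ext f (c i) S'" if "i \<in> I" for i
      using that by (intro lin_ext_eq_sum[OF \<open>finite A\<close>, symmetric]) (auto simp: A_def)
  qed
  finally show ?thesis .
qed

lemma lin_ext_add:
  assumes "finite (supp c)" "finite (supp d)"
  shows "lin_ext f (\<lambda>S. k * c S + l * d S) S' = k * lin_ext f c S' + l * lin_ext f d S'"
proof -
  define A where "A = supp c \<union> supp d"
  have "finite A"
    using assms by (simp add: A_def)
  have "lin_ext f (\<lambda>S. k * c S + l * d S) S' = (\<Sum>U\<in>A. (k * c U + l * d U) * f U S')"
    by (rule lin_ext_eq_sum[OF \<open>finite A\<close>]) (auto simp: A_def)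
  also have "\<dots> = k * (\<Sum>U\<in>A. c U * f U S') + l * (\<Sum>U\<in>A. d U * f U S')"
    by (simp add: algebra_simps sum.distrib sum_distrib_left)
  also have "\<dots> = k * lin_ext f c S' + l * lin_ext f d S'"
    by (simp add: lin_ext_eq_sum[OF \<open>finite A\<close>, of c] lin_ext_eq_sum[OF \<open>finite A\<close>, of d] A_def)
  finally show ?thesis .
qed

lemma lin_ext_lin_ext:
  assumes "finite (supp c)" "\<And>T. finite (supp (g T))"
  shows "lin_ext f (lin_ext g c) = lin_ext (\<lambda>T. lin_ext f (g T)) c"
proof
  fix S
  have "lin_ext g c = (\<lambda>U. \<Sum>T\<in>supp c. c T * g T U)"
    unfolding lin_ext_def ..
  then have "lin_ext f (lin_ext g c) S = (\<Sum>T\<in>supp c. c T * lin_ext f (g T) S)"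
    using assms by (simp add: lin_ext_sum)
  then show "lin_ext f (lin_ext g c) S = lin_ext (\<lambda>T. lin_ext f (g T)) c S"
    by (simp add: lin_ext_def)
qed

definition insert_coord :: "nat \<Rightarrow> 'a \<Rightarrow> (nat \<Rightarrow> 'a) \<Rightarrow> nat \<Rightarrow> 'a" where
  "insert_coord j t f = (\<lambda>k. if k < j then f k else if k = j then t else f (k - 1))"

definition delete_coord :: "nat \<Rightarrow> (nat \<Rightarrow> 'a) \<Rightarrow> nat \<Rightarrow> 'a" where
  "delete_coord j f = (\<lambda>k. if k < j then f k else f (Suc k))"

lemma insert_coord_same [simp]: "insert_coord j t f j = t"
  by (simp add: insert_coord_def)

lemma delete_insert_coord [simp]: "delete_coord j (insert_coord j t f) = f"
  by (simp add: fun_eq_iff delete_coord_def insert_coord_def)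

lemma insert_delete_coord [simp]: "insert_coord j (f j) (delete_coord j f) = f"
proof
  fix k
  show "insert_coord j (f j) (delete_coord j f) k = f k"
    by (cases "k < j"; cases "k = j") (auto simp: insert_coord_def delete_coord_def)
qed

lemma insert_coord_PiE:
  assumes "j \<le> m" "t \<in> A" "f \<in> {..<m} \<rightarrow>\<^sub>E A"
  shows "insert_coord j t f \<in> {..<Suc m} \<rightarrow>\<^sub>E A"
proof (rule PiE_I)
  fix k
  assume "k \<in> {..<Suc m}"
  then show "insert_coord j t f k \<in> A"
    unfolding insert_coord_def using assms(1,2) PiE_mem[OF assms(3)] by auto
next
  fix k
  assume "k \<notin> {..<Suc m}"
  then show "insert_coord j t f k = undefined"
    unfolding insert_coord_def using assms(1) PiE_arb[OF assms(3)] by auto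
qed

lemma delete_coord_PiE:
  assumes "j \<le> m" "f \<in> {..<Suc m} \<rightarrow>\<^sub>E A"
  shows "delete_coord j f \<in> {..<m} \<rightarrow>\<^sub>E A"
proof (rule PiE_I)
  fix k
  assume "k \<in> {..<m}"
  then show "delete_coord j f k \<in> A"
    unfolding delete_coord_def using PiE_mem[OF assms(2)] by auto
next
  fix k
  assume "k \<notin> {..<m}"
  then show "delete_coord j f k = undefined"
    unfolding delete_coord_def using assms(1) PiE_arb[OF assms(2)] by auto
qed

lemma bij_betw_insert_coord:
  assumes "j \<le> m"
  shows "bij_betw (\<lambda>(t, f). insert_coord j t f) (A \<times> ({..<m} \<rightarrow>\<^sub>E A)) ({..<Suc m} \<rightarrow>\<^sub>E A)"
proof (rule bij_betwI[where g = "\<lambda>w. (w j, delete_coord j w)"])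
  show "(\<lambda>(t, f). insert_coord j t f) \<in> A \<times> ({..<m} \<rightarrow>\<^sub>E A) \<rightarrow> {..<Suc m} \<rightarrow>\<^sub>E A"
    using assms by (simp add: Pi_iff insert_coord_PiE)
  show "(\<lambda>w. (w j, delete_coord j w)) \<in> ({..<Suc m} \<rightarrow>\<^sub>E A) \<rightarrow> A \<times> ({..<m} \<rightarrow>\<^sub>E A)"
    using assms PiE_mem[of _ "{..<Suc m}" "\<lambda>_. A" j] by (simp add: Pi_iff delete_coord_PiE)
qed (simp_all add: case_prod_unfold)

lemma sum_PiE_insert_coord:
  assumes "j \<le> m"
  shows "(\<Sum>w\<in>{..<Suc m} \<rightarrow>\<^sub>E A. h w) = (\<Sum>t\<in>A. \<Sum>f\<in>{..<m} \<rightarrow>\<^sub>E A. h (insert_coord j t f))"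
  by (simp add: sum.cartesian_product sum.reindex_bij_betw[OF bij_betw_insert_coord[OF assms], symmetric]
      case_prod_unfold)

lemma prod_insert_coord:
  assumes "j \<le> m"
  shows "(\<Prod>i<Suc m. g (insert_coord j t f i)) = g t * (\<Prod>i<m. (g (f i) :: 'a::comm_monoid_mult))"
  using assms
proof (induction m)
  case 0
  then show ?case
    by simp
next
  case (Suc m)
  show ?case
  proof (cases "j = Suc m")
    case True
    then have "(\<Prod>i<Suc m. g (insert_coord j t f i)) = (\<Prod>i<Suc m. g (f i))"
      by (intro prod.cong) (auto simp: insert_coord_def)
    then show ?thesis
      using True by (simp add: mult.commute)
  next
    case False
    with Suc have "j \<le> m" "insert_coord j t f (Suc m) = f m"
      by (auto simp: insert_coord_def)
    with Suc.IH show ?thesis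
      by (simp add: mult.assoc)
  qed
qed

text \<open>The admissible pairs \<open>(e\<^sub>i, v\<^sub>i)\<close> of the subdivision: under \<open>sd_affine\<close> they map [0,1]
  onto [0,1/3], onto [1/3,2/3] with reversed orientation, and onto [2/3,1].\<close>

definition sd_pieces :: "(real \<times> int) set" where
  "sd_pieces = {(0, 1), (2, -1), (2, 1)}"

definition sd_affine :: "real \<times> int \<Rightarrow> real \<Rightarrow> real" where
  "sd_affine r t = (fst r + real_of_int (snd r) * t) / 3"

abbreviation sd_index :: "nat \<Rightarrow> (nat \<Rightarrow> real \<times> int) set" where
  "sd_index n \<equiv> {..<n} \<rightarrow>\<^sub>E sd_pieces"

definition sd_sign :: "nat \<Rightarrow> (nat \<Rightarrow> real \<times> int) \<Rightarrow> int" where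
  "sd_sign n w = - (\<Prod>i<n. snd (w i))"

definition sd_piece_map :: "nat \<Rightarrow> (nat \<Rightarrow> real \<times> int) \<Rightarrow> (nat \<Rightarrow> real) \<Rightarrow> nat \<Rightarrow> real" where
  "sd_piece_map n w x = (\<lambda>i. if i < n then sd_affine (w i) (x i) else 0)"

definition sd_piece ::
    "nat \<Rightarrow> (nat \<Rightarrow> real \<times> int) \<Rightarrow> ((nat \<Rightarrow> real) \<Rightarrow> 'x) \<Rightarrow> (nat \<Rightarrow> real) \<Rightarrow> 'x" where
  "sd_piece n w T = (\<lambda>x. if x \<in> unit_cube n then T (sd_piece_map n w x) else undefined)"

lemma sd_affine_in_unit_interval:
  assumes "r \<in> sd_pieces" "0 \<le> t" "t \<le> 1"
  shows "0 \<le> sd_affine r t \<and> sd_affine r t \<le> 1"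
  using assms by (auto simp: sd_pieces_def sd_affine_def)

lemma sum_sd_pieces_endpoint:
  fixes g :: "real \<Rightarrow> 'a::comm_ring_1"
  assumes "t = 0 \<or> t = 1"
  shows "(\<Sum>r\<in>sd_pieces. of_int (snd r) * g (sd_affine r t)) = g t"
  using assms by (auto simp: sd_pieces_def sd_affine_def)

lemma bij_betw_sd_index_sd_E_sd_V:
  "bij_betw (\<lambda>w. (\<lambda>i\<in>{..<n}. fst (w i), \<lambda>i\<in>{..<n}. snd (w i))) (sd_index n) (Sigma (sd_E n) (sd_V n))"
proof (rule bij_betwI[where g = "\<lambda>(e, v). \<lambda>i\<in>{..<n}. (e i, v i)"])
  have "fst (w i) \<in> {0, 2} \<and> snd (w i) \<in> {-1, 1} \<and> (fst (w i) = 0 \<longrightarrow> snd (w i) = 1)"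
    if "w \<in> sd_index n" "i < n" for w i
    using PiE_mem[OF that(1), of i] that(2) by (auto simp: sd_pieces_def)
  then show "(\<lambda>w. (\<lambda>i\<in>{..<n}. fst (w i), \<lambda>i\<in>{..<n}. snd (w i))) \<in> sd_index n \<rightarrow> Sigma (sd_E n) (sd_V n)"
    by (simp add: Pi_iff sd_E_def sd_V_def restrict_PiE_iff)
  have "(e i, v i) \<in> sd_pieces" if "e \<in> sd_E n" "v \<in> sd_V n e" "i < n" for e v i
    using that by (auto simp: sd_E_def sd_V_def sd_pieces_def PiE_iff)
  then show "(\<lambda>(e, v). \<lambda>i\<in>{..<n}. (e i, v i)) \<in> Sigma (sd_E n) (sd_V n) \<rightarrow> sd_index n"
    by (simp add: Pi_iff restrict_PiE_iff)
  show "(\<lambda>(e, v). \<lambda>i\<in>{..<n}. (e i, v i)) (\<lambda>i\<in>{..<n}. fst (w i), \<lambda>i\<in>{..<n}. snd (w i)) = w"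
    if "w \<in> sd_index n" for w
    using PiE_arb[OF that] by (auto simp: fun_eq_iff)
  show "(\<lambda>w. (\<lambda>i\<in>{..<n}. fst (w i), \<lambda>i\<in>{..<n}. snd (w i))) ((\<lambda>(e, v). \<lambda>i\<in>{..<n}. (e i, v i)) p) = p"
    if p_mem: "p \<in> Sigma (sd_E n) (sd_V n)" for p
  proof -
    obtain e v where "p = (e, v)" "e \<in> sd_E n" "v \<in> sd_V n e"
      using p_mem by blast
    then show ?thesis
      using PiE_arb[of e "{..<n}" "\<lambda>_. {0, 2}"] PiE_arb[of v "{..<n}" "\<lambda>_. {-1, 1}"]
      by (auto simp: fun_eq_iff sd_E_def sd_V_def)
  qed
qed

lemma sum_sd_E_sd_V_eq_sd_index:
  "(\<Sum>e\<in>sd_E n. \<Sum>v\<in>sd_V n e. h e v)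
     = (\<Sum>w\<in>sd_index n. h (\<lambda>i\<in>{..<n}. fst (w i)) (\<lambda>i\<in>{..<n}. snd (w i)))"
proof -
  have "finite (sd_E n)"
    unfolding sd_E_def by (auto intro: finite_PiE)
  moreover have "finite (sd_V n e)" for e
    unfolding sd_V_def by (rule finite_subset[of _ "{..<n} \<rightarrow>\<^sub>E {-1, 1}"]) (auto intro: finite_PiE)
  ultimately have "(\<Sum>e\<in>sd_E n. \<Sum>v\<in>sd_V n e. h e v) = (\<Sum>(e, v)\<in>Sigma (sd_E n) (sd_V n). h e v)"
    by (simp add: sum.Sigma)
  also have "\<dots> = (\<Sum>w\<in>sd_index n. h (\<lambda>i\<in>{..<n}. fst (w i)) (\<lambda>i\<in>{..<n}. snd (w i)))"
    by (simp add: sum.reindex_bij_betw[OF bij_betw_sd_index_sd_E_sd_V, symmetric])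
  finally show ?thesis .
qed

lemma sd_cube_Suc:
  "sd_cube (Suc m) T
    = (\<lambda>S. \<Sum>w\<in>sd_index (Suc m). of_int (sd_sign (Suc m) w) * basis_chain (sd_piece (Suc m) w T) S)"
proof -
  have sd_map_eq: "sd_map (Suc m) (\<lambda>i\<in>{..<Suc m}. fst (w i)) (\<lambda>i\<in>{..<Suc m}. snd (w i))
      = sd_piece_map (Suc m) w" for w
    by (simp add: fun_eq_iff sd_map_def sd_piece_map_def sd_affine_def)
  have prod_eq: "(\<Prod>i<Suc m. (\<lambda>i\<in>{..<Suc m}. snd (w i)) i) = (\<Prod>i<Suc m. snd (w i))" for w
    by (rule prod.cong) auto
  show ?thesis
    unfolding sd_cube_def sum_sd_E_sd_V_eq_sd_index sd_map_eq prod_eq sd_sign_def sd_piece_def by simp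
qed

lemma sd_cube_eq_sum_pieces:
  assumes "T \<in> extensional (unit_cube n)"
  shows "sd_cube n T = (\<lambda>S. \<Sum>w\<in>sd_index n. of_int (sd_sign n w) * basis_chain (sd_piece n w T) S)"
proof (cases n)
  case 0
  have "sd_piece_map 0 w x = x" if "x \<in> unit_cube 0" for w x
    using that by (auto simp: unit_cube_def sd_piece_map_def)
  then have "sd_piece 0 w T = T" for w
    using assms 0 unfolding sd_piece_def extensional_def by auto
  then show ?thesis
    using 0 by (simp add: sd_cube_def sd_sign_def)
next
  case (Suc m)
  then show ?thesis
    by (simp add: sd_cube_Suc)
qed

lemma finite_supp_sd_cube: "finite (supp (sd_cube n T :: ('x, 'r::comm_ring_1) chain))"
proof (cases n)
  case 0
  then show ?thesis
    using finite_supp_basis_chain[of T] by (simp add: sd_cube_def)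
next
  case (Suc m)
  then show ?thesis
    unfolding Suc sd_cube_Suc
    by (intro finite_supp_sum finite_supp_basis_chain finite_PiE) (auto simp: sd_pieces_def)
qed

lemma sd_sign_insert_coord:
  assumes "j \<le> m"
  shows "sd_sign (Suc m) (insert_coord j r w) = snd r * sd_sign m w"
  unfolding sd_sign_def prod_insert_coord[OF assms, of snd] by simp

lemma sd_piece_map_insert_coord:
  assumes "j \<le> m"
  shows "sd_piece_map (Suc m) (insert_coord j r w) (insert_coord j t x)
    = insert_coord j (sd_affine r t) (sd_piece_map m w x)"
  using assms by (auto simp: fun_eq_iff sd_piece_map_def insert_coord_def)

lemma insert_coord_in_unit_cube:
  assumes "j \<le> m" "x \<in> unit_cube m" "0 \<le> t" "t \<le> 1"
  shows "insert_coord j t x \<in> unit_cube (Suc m)"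
  using assms by (auto simp: unit_cube_def insert_coord_def)

lemma sd_piece_map_in_unit_cube:
  assumes "w \<in> sd_index m" "x \<in> unit_cube m"
  shows "sd_piece_map m w x \<in> unit_cube m"
proof -
  have "0 \<le> sd_affine (w i) (x i) \<and> sd_affine (w i) (x i) \<le> 1" if "i < m" for i
    using assms that by (intro sd_affine_in_unit_interval) (auto simp: unit_cube_def)
  then show ?thesis
    by (simp add: unit_cube_def sd_piece_map_def)
qed

lemma cube_face_Suc:
  "cube_face (Suc m) t j T = (\<lambda>x. if x \<in> unit_cube m then T (insert_coord j t x) else undefined)"
  unfolding cube_face_def insert_coord_def by simp

lemma cube_face_sd_piece:
  assumes "j \<le> m" "r \<in> sd_pieces" "w \<in> sd_index m" "0 \<le> t" "t \<le> 1"
  shows "cube_face (Suc m) t j (sd_piece (Suc m) (insert_coord j r w) T)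
    = sd_piece m w (cube_face (Suc m) (sd_affine r t) j T)"
proof
  fix x
  show "cube_face (Suc m) t j (sd_piece (Suc m) (insert_coord j r w) T) x
    = sd_piece m w (cube_face (Suc m) (sd_affine r t) j T) x"
  proof (cases "x \<in> unit_cube m")
    case True
    then have "insert_coord j t x \<in> unit_cube (Suc m)" "sd_piece_map m w x \<in> unit_cube m"
      using assms insert_coord_in_unit_cube sd_piece_map_in_unit_cube by blast+
    with True show ?thesis
      using assms(1) by (simp add: cube_face_Suc sd_piece_def sd_piece_map_insert_coord)
  next
    case False
    then show ?thesis
      by (simp add: cube_face_Suc sd_piece_def)
  qed
qed

lemma lin_ext_cube_face_sd_cube:
  assumes "j \<le> m" "t = 0 \<or> t = 1"
  shows "lin_ext (\<lambda>U. basis_chain (cube_face (Suc m) t j U)) (sd_cube (Suc m) T)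
    = (sd_cube m (cube_face (Suc m) t j T) :: ('x, 'r::comm_ring_1) chain)"
proof
  fix S
  let ?B = "\<lambda>w s. basis_chain (sd_piece m w (cube_face (Suc m) s j T)) S :: 'r"
  have t: "0 \<le> t" "t \<le> 1"
    using assms(2) by auto
  have "lin_ext (\<lambda>U. basis_chain (cube_face (Suc m) t j U)) (sd_cube (Suc m) T) S
      = (\<Sum>w\<in>sd_index (Suc m). of_int (sd_sign (Suc m) w)
           * basis_chain (cube_face (Suc m) t j (sd_piece (Suc m) w T)) S)"
    unfolding sd_cube_Suc
    by (subst lin_ext_sum) (auto simp: finite_supp_basis_chain lin_ext_basis_chain sd_pieces_def intro: finite_PiE)
  also have "\<dots> = (\<Sum>r\<in>sd_pieces. \<Sum>w\<in>sd_index m.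
      of_int (snd r) * (of_int (sd_sign m w) * ?B w (sd_affine r t)))"
    using assms(1) t
    by (simp add: sum_PiE_insert_coord[OF assms(1)] sd_sign_insert_coord cube_face_sd_piece mult.assoc)
  also have "\<dots> = (\<Sum>w\<in>sd_index m. of_int (sd_sign m w)
      * (\<Sum>r\<in>sd_pieces. of_int (snd r) * ?B w (sd_affine r t)))"
    by (subst sum.swap) (simp add: sum_distrib_left algebra_simps)
  also have "\<dots> = (\<Sum>w\<in>sd_index m. of_int (sd_sign m w) * ?B w t)"
  proof (intro sum.cong refl arg_cong[where f = "(*) _"])
    show "(\<Sum>r\<in>sd_pieces. of_int (snd r) * ?B w (sd_affine r t)) = ?B w t" for w
      by (rule sum_sd_pieces_endpoint[OF assms(2), of "?B w"])
  qed
  also have "\<dots> = sd_cube m (cube_face (Suc m) t j T) S"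
    by (simp add: sd_cube_eq_sum_pieces cube_face_Suc extensional_def)
  finally show "lin_ext (\<lambda>U. basis_chain (cube_face (Suc m) t j U)) (sd_cube (Suc m) T) S
    = (sd_cube m (cube_face (Suc m) t j T) S :: 'r)" .
qed

lemma lin_ext_boundary_cube:
  "lin_ext (boundary_cube a b n) c S = (\<Sum>j<n. (-1) ^ j *
      (a * lin_ext (\<lambda>U. basis_chain (cube_face n 0 j U)) c S
     + b * lin_ext (\<lambda>U. basis_chain (cube_face n 1 j U)) c S))"
  by (cases "n = 0")
     (simp_all add: lin_ext_def boundary_cube_def sum_distrib_left sum_distrib_right
        sum.distrib algebra_simps sum.swap[where A = "supp c"])

lemma finite_supp_boundary_cube: "finite (supp (boundary_cube a b n T))"
  unfolding boundary_cube_def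
  by (auto intro!: finite_supp_sum finite_supp_add finite_supp_basis_chain)

lemma lin_ext_boundary_cube_sd_cube:
  "lin_ext (boundary_cube a b (Suc m)) (sd_cube (Suc m) T)
    = lin_ext (sd_cube m) (boundary_cube a b (Suc m) T)"
proof
  fix S
  have "lin_ext (boundary_cube a b (Suc m)) (sd_cube (Suc m) T) S
      = (\<Sum>j<Suc m. (-1) ^ j *
          (a * sd_cube m (cube_face (Suc m) 0 j T) S + b * sd_cube m (cube_face (Suc m) 1 j T) S))"
    by (simp add: lin_ext_boundary_cube lin_ext_cube_face_sd_cube)
  also have "\<dots> = lin_ext (sd_cube m) (boundary_cube a b (Suc m) T) S"
    unfolding boundary_cube_def
    by (simp add: lin_ext_sum lin_ext_add finite_supp_add finite_supp_basis_chain lin_ext_basis_chain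
        del: sum.lessThan_Suc)
  finally show "lin_ext (boundary_cube a b (Suc m)) (sd_cube (Suc m) T) S
    = lin_ext (sd_cube m) (boundary_cube a b (Suc m) T) S" .
qed

theorem lemma3:
  fixes X :: "'x topology" and a b :: "'r::comm_ring_1" and n :: nat
    and c :: "('x, 'r) chain"
  assumes "n \<ge> 1" and "c \<in> cube_chains n X"
  shows "boundary a b n (subdivision n c) = subdivision (n - 1) (boundary a b n c)"
proof -
  obtain m where n: "n = Suc m"
    using assms(1) by (cases n) auto
  have "finite (supp c)"
    using assms(2) by (simp add: cube_chains_def)
  then show ?thesis
    unfolding boundary_def subdivision_def n
    by (simp add: lin_ext_lin_ext finite_supp_sd_cube finite_supp_boundary_cube
        lin_ext_boundary_cube_sd_cube)
qed

end
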